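(* Let $H_1$ and $H_2$ be two contextuality scenarios with $H_1\sim_{vcz}H_2$. Then any choice of $H_1^{vcz}$ and any choice of $H_2^{vcz}$ are observationally equivalent.
   Context: A contextuality scenario is a hypergraph $H=(V,E)$ (with $V$ finite and $E$ a set of subsets of $V$) with no isolated vertex, i.e. $V=\bigcup_{e\in E}e$. A probabilistic model on $H$ is a function $p:V\to[0,1]$ with $\sum_{v\in e}p(v)=1$ for every $e\in E$; the set of such models is $\mathcal{G}(H)$, and for $W\subseteq V$ one writes $p(W)=\sum_{v\in W}p(v)$. For $W\subseteq V$, the induced sub-hypergraph is $H_W=(W,\{e\cap W: e\in E\})$. Two scenarios $H=(V,E)$, $H'=(V',E')$ are observationally equivalent if there is a bijection $\phi:V'\to V$ with $\mathcal{G}(H')=\{p\circ\phi: p\in\mathcal{G}(H)\}$. Virtual equivalence: a set $e\subseteq V$ is a virtual edge of $H$ if $\sum_{v\in e}p(v)=1$ for all $p\in\mathcal{G}(H)$; $H$ is virtually included in any $H'=(V,E\cup E')$ where $E'$ consists only of virtual edges of $H$; virtual equivalence is the symmetric closure of this relation. The completion $\overline{H}$ of $H$ is the virtually equivalent scenario with the most edges (i.e. with all virtual edges added). Equivalence by contraction: a nonempty $W\subseteq V$ can be contracted in $H$ if for every $e\in E$, either $W\subseteq e$ or $W\cap e=\emptyset$. For every nonempty $W'\subseteq W$, the induced sub-hypergraph $H_{V\setminus(W\setminus W')}$ is a contraction of $H$; equivalence by contraction is the symmetric transitive closure of this relation. Zero equivalence: for $W\subseteq V$, $H$ zero-reduces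 to $H_W$ if $p(v)=0$ for all $p\in\mathcal{G}(H)$ and all $v\in V\setminus W$ (the vertices of $V\setminus W$ are then called zero weighted); zero equivalence is the symmetric closure of zero-reduction. VCZ equivalence $\sim_{vcz}$ is the smallest equivalence relation containing virtual equivalence, equivalence by contraction and zero equivalence. For a scenario $H$, a choice of $H^{vcz}=(V^{vcz},E^{vcz})$ is a scenario obtained from $H$ by removing all zero weighted vertices, then contracting the remaining vertices so that $|V^{vcz}|$ is minimal, then taking the completion and removing edges (by virtual equivalence) so that $|E^{vcz}|$ is minimal. *)

theory Defs
  imports Complex_Main "HOL-Library.FuncSet"
begin

type_synonym 'a hypergraph = "'a set \<times> 'a set set"

definition verts :: "'a hypergraph \<Rightarrow> 'a set" where "verts H = fst H"
definition edges :: "'a hypergraph \<Rightarrow> 'a set set" where "edges H = snd H"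

definition scenario :: "'a hypergraph \<Rightarrow> bool" where
  "scenario H \<longleftrightarrow> finite (verts H) \<and> (\<forall>e\<in>edges H. e \<subseteq> verts H) \<and> verts H = \<Union>(edges H)"

definition models :: "'a hypergraph \<Rightarrow> ('a \<Rightarrow> real) set" where
  "models H = {p. p \<in> extensional (verts H) \<and> (\<forall>v\<in>verts H. 0 \<le> p v \<and> p v \<le> 1)
                 \<and> (\<forall>e\<in>edges H. (\<Sum>v\<in>e. p v) = 1)}"

definition obs_equiv :: "'a hypergraph \<Rightarrow> 'b hypergraph \<Rightarrow> bool" where
  "obs_equiv H H' \<longleftrightarrow> (\<exists>\<phi>. bij_betw \<phi> (verts H') (verts H) \<and>
      models H' = (\<lambda>p. restrict (p \<circ> \<phi>) (verts H')) ` models H)"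

definition induced :: "'a hypergraph \<Rightarrow> 'a set \<Rightarrow> 'a hypergraph" where
  "induced H W = (W, (\<lambda>e. e \<inter> W) ` edges H)"

definition virtual_edge :: "'a hypergraph \<Rightarrow> 'a set \<Rightarrow> bool" where
  "virtual_edge H e \<longleftrightarrow> e \<subseteq> verts H \<and> (\<forall>p\<in>models H. (\<Sum>v\<in>e. p v) = 1)"

definition virt_incl :: "'a hypergraph \<Rightarrow> 'a hypergraph \<Rightarrow> bool" where
  "virt_incl H H' \<longleftrightarrow> verts H' = verts H \<and> edges H \<subseteq> edges H' \<and>
      (\<forall>e\<in>edges H' - edges H. virtual_edge H e)"

definition completion :: "'a hypergraph \<Rightarrow> 'a hypergraph" where
  "completion H = (verts H, {e. virtual_edge H e})"

definition contractible :: "'a hypergraph \<Rightarrow> 'a set \<Rightarrow> bool" where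
  "contractible H W \<longleftrightarrow> W \<noteq> {} \<and> W \<subseteq> verts H \<and> (\<forall>e\<in>edges H. W \<subseteq> e \<or> W \<inter> e = {})"

definition contraction :: "'a hypergraph \<Rightarrow> 'a hypergraph \<Rightarrow> bool" where
  "contraction H H' \<longleftrightarrow> (\<exists>W W'. contractible H W \<and> W' \<subseteq> W \<and> W' \<noteq> {} \<and>
      H' = induced H (verts H - (W - W')))"

definition zero_reduces :: "'a hypergraph \<Rightarrow> 'a set \<Rightarrow> bool" where
  "zero_reduces H W \<longleftrightarrow> W \<subseteq> verts H \<and> (\<forall>p\<in>models H. \<forall>v\<in>verts H - W. p v = 0)"

inductive vcz_equiv :: "'a hypergraph \<Rightarrow> 'a hypergraph \<Rightarrow> bool" where
  vcz_refl: "scenario H \<Longrightarrow> vcz_equiv H H"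
| vcz_virt: "scenario H \<Longrightarrow> scenario H' \<Longrightarrow> virt_incl H H' \<Longrightarrow> vcz_equiv H H'"
| vcz_contr: "scenario H \<Longrightarrow> scenario H' \<Longrightarrow> contraction H H' \<Longrightarrow> vcz_equiv H H'"
| vcz_zero: "scenario H \<Longrightarrow> zero_reduces H W \<Longrightarrow> scenario (induced H W) \<Longrightarrow>
     vcz_equiv H (induced H W)"
| vcz_sym: "vcz_equiv H H' \<Longrightarrow> vcz_equiv H' H"
| vcz_trans: "vcz_equiv H H' \<Longrightarrow> vcz_equiv H' H'' \<Longrightarrow> vcz_equiv H H''"

definition remove_zero :: "'a hypergraph \<Rightarrow> 'a hypergraph" where
  "remove_zero H = induced H {v\<in>verts H. \<exists>p\<in>models H. p v \<noteq> 0}"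

definition is_vcz_choice :: "'a hypergraph \<Rightarrow> 'a hypergraph \<Rightarrow> bool" where
  "is_vcz_choice H K \<longleftrightarrow>
     (\<exists>Hc. contraction\<^sup>*\<^sup>* (remove_zero H) Hc \<and>
        (\<forall>H''. contraction\<^sup>*\<^sup>* (remove_zero H) H'' \<longrightarrow> card (verts Hc) \<le> card (verts H'')) \<and>
        verts K = verts Hc \<and> edges K \<subseteq> edges (completion Hc) \<and> scenario K \<and>
        virt_incl K (completion Hc) \<and>
        (\<forall>E''. E'' \<subseteq> edges (completion Hc) \<and> scenario (verts Hc, E'') \<and>
               virt_incl (verts Hc, E'') (completion Hc) \<longrightarrow> card (edges K) \<le> card E''))"

end

(* Call two vertices twins if they lie in exactly the same edges, and split the support
   (the vertices that carry weight in some model) into twin classes.  Summing a model over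
   each twin class gives a coarse-grained model, and the set of coarse-grained models, up to
   a relabelling of the classes, is invariant under the three elementary moves:
   zero reduction does not touch the support; contraction of W keeps the class sums, because
   the weight of W can be concentrated on a single kept vertex; and a virtual edge cannot
   separate a supported vertex from a twin, because shifting weight between twins yields
   another model.  A choice of H^vcz has full support and no twins (two twins could be
   contracted further), so its twin classes are singletons and its coarse-grained models are
   just its models. *)

theory Submission
  imports Defs
begin

definition model_iso :: "'a set \<Rightarrow> ('a \<Rightarrow> real) set \<Rightarrow> 'b set \<Rightarrow> ('b \<Rightarrow> real) set \<Rightarrow> bool" where
  "model_iso A M B N \<longleftrightarrow> (\<exists>\<phi>. bij_betw \<phi> B A \<and> N = (\<lambda>p. restrict (p \<circ> \<phi>) B) ` M)"

lemma obs_equiv_iff_model_iso: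
  "obs_equiv H H' \<longleftrightarrow> model_iso (verts H) (models H) (verts H') (models H')"
  unfolding obs_equiv_def model_iso_def ..

lemma model_iso_refl:
  assumes "M \<subseteq> extensional A"
  shows "model_iso A M A M"
proof -
  have "M = (\<lambda>p. restrict (p \<circ> id) A) ` M"
    using assms by (force simp: extensional_restrict)
  then show ?thesis
    unfolding model_iso_def by (intro exI[of _ id]) simp
qed

lemma model_iso_sym:
  assumes iso: "model_iso A M B N" and ext: "M \<subseteq> extensional A"
  shows "model_iso B N A M"
proof -
  obtain \<phi> where \<phi>: "bij_betw \<phi> B A" and N: "N = (\<lambda>p. restrict (p \<circ> \<phi>) B) ` M"
    using iso unfolding model_iso_def by blast
  define \<psi> where "\<psi> = inv_into B \<phi>"
  have \<psi>: "bij_betw \<psi> A B"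
    unfolding \<psi>_def using \<phi> by (rule bij_betw_inv_into)
  have \<phi>\<psi>: "\<phi> (\<psi> a) = a" if "a \<in> A" for a
    unfolding \<psi>_def using \<phi> that by (rule bij_betw_inv_into_right)
  have "restrict (restrict (p \<circ> \<phi>) B \<circ> \<psi>) A = p" if "p \<in> M" for p
    using ext that \<phi>\<psi> bij_betwE[OF \<psi>] by (force simp: fun_eq_iff extensional_def)
  then have "M = (\<lambda>q. restrict (q \<circ> \<psi>) A) ` N"
    unfolding N image_image by simp
  with \<psi> show ?thesis
    unfolding model_iso_def by blast
qed

lemma model_iso_trans:
  assumes "model_iso A M B N" and "model_iso B N C L"
  shows "model_iso A M C L"
proof -
  obtain \<phi> where \<phi>: "bij_betw \<phi> B A" and N: "N = (\<lambda>p. restrict (p \<circ> \<phi>) B) ` M"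
    using assms(1) unfolding model_iso_def by blast
  obtain \<chi> where \<chi>: "bij_betw \<chi> C B" and L: "L = (\<lambda>p. restrict (p \<circ> \<chi>) C) ` N"
    using assms(2) unfolding model_iso_def by blast
  have comp: "restrict (restrict (p \<circ> \<phi>) B \<circ> \<chi>) C = restrict (p \<circ> (\<phi> \<circ> \<chi>)) C"
    for p :: "'a \<Rightarrow> real"
    using bij_betwE[OF \<chi>] by (auto simp: fun_eq_iff)
  have "L = (\<lambda>p. restrict (p \<circ> (\<phi> \<circ> \<chi>)) C) ` M"
    unfolding L N image_image by (rule image_cong[OF refl comp])
  with bij_betw_trans[OF \<chi> \<phi>] show ?thesis
    unfolding model_iso_def by blast
qed

lemma verts_induced [simp]: "verts (induced H X) = X"
  unfolding induced_def verts_def by simp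

lemma edges_induced [simp]: "edges (induced H X) = (\<lambda>e. e \<inter> X) ` edges H"
  unfolding induced_def edges_def by simp

lemma finite_verts: "scenario H \<Longrightarrow> finite (verts H)"
  unfolding scenario_def by blast

lemma finite_edge: "scenario H \<Longrightarrow> e \<in> edges H \<Longrightarrow> finite e"
  unfolding scenario_def by (meson finite_subset)

lemma scenario_induced:
  assumes "scenario H" and "X \<subseteq> verts H"
  shows "scenario (induced H X)"
proof -
  have "finite X"
    using assms finite_subset unfolding scenario_def by blast
  with assms show ?thesis
    unfolding scenario_def by auto
qed

lemma sum_edge_le_1:
  assumes "scenario H" and "p \<in> models H" and "e \<in> edges H" and "S \<subseteq> e"
  shows "(\<Sum>v\<in>S. p v) \<le> 1"
proof -
  have "(\<Sum>v\<in>S. p v) \<le> (\<Sum>v\<in>e. p v)"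
    using assms finite_edge[OF assms(1,3)] unfolding scenario_def models_def
    by (intro sum_mono2) auto
  then show ?thesis
    using assms(2,3) unfolding models_def by simp
qed

lemma models_induced:
  assumes sc: "scenario H" and X: "X \<subseteq> verts H"
  shows "models (induced H X) =
    (\<lambda>p. restrict p X) ` {p \<in> models H. \<forall>v \<in> verts H - X. p v = 0}"
proof -
  have sum_inter: "(\<Sum>v\<in>e \<inter> X. p v) = (\<Sum>v\<in>e. p v)"
    if "e \<in> edges H" and "\<forall>v \<in> verts H - X. p v = 0" for e and p :: "'a \<Rightarrow> real"
    using that sc finite_edge[OF sc] unfolding scenario_def
    by (intro sum.mono_neutral_left) auto
  show ?thesis
  proof (intro equalityI subsetI)
    fix q assume q: "q \<in> models (induced H X)"
    define p where "p = restrict (\<lambda>v. if v \<in> X then q v else 0) (verts H)"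
    have "(\<Sum>v\<in>e. p v) = 1" if "e \<in> edges H" for e
    proof -
      have "(\<Sum>v\<in>e. p v) = (\<Sum>v\<in>e \<inter> X. p v)"
        by (rule sum_inter[OF that, symmetric]) (simp add: p_def)
      also have "\<dots> = (\<Sum>v\<in>e \<inter> X. q v)"
        using X by (intro sum.cong) (auto simp: p_def)
      finally show ?thesis
        using q that unfolding models_def by simp
    qed
    then have "p \<in> models H"
      using q unfolding models_def p_def by auto
    moreover have "q = restrict p X"
      using q X unfolding models_def p_def by (auto simp: fun_eq_iff extensional_def)
    moreover have "\<forall>v \<in> verts H - X. p v = 0"
      unfolding p_def by simp
    ultimately show "q \<in> (\<lambda>p. restrict p X) ` {p \<in> models H. \<forall>v \<in> verts H - X. p v = 0}"
      by blast
  next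
    fix q assume "q \<in> (\<lambda>p. restrict p X) ` {p \<in> models H. \<forall>v \<in> verts H - X. p v = 0}"
    then obtain p where p: "p \<in> models H" "\<forall>v \<in> verts H - X. p v = 0" and q: "q = restrict p X"
      by blast
    have "(\<Sum>v\<in>e \<inter> X. q v) = 1" if "e \<in> edges H" for e
      using sum_inter[OF that p(2)] p(1) that unfolding q models_def by simp
    then show "q \<in> models (induced H X)"
      using p X unfolding q models_def by auto
  qed
qed

definition support :: "'a hypergraph \<Rightarrow> 'a set" where
  "support H = {v \<in> verts H. \<exists>p \<in> models H. p v \<noteq> 0}"

lemma support_subset: "support H \<subseteq> verts H"
  unfolding support_def by blast

lemma model_vanishes_off_support:
  "p \<in> models H \<Longrightarrow> v \<in> verts H \<Longrightarrow> v \<notin> support H \<Longrightarrow> p v = 0"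
  unfolding support_def by blast

definition twins :: "'a hypergraph \<Rightarrow> 'a \<Rightarrow> 'a \<Rightarrow> bool" where
  "twins H u v \<longleftrightarrow> (\<forall>e \<in> edges H. u \<in> e \<longleftrightarrow> v \<in> e)"

lemma twins_refl [simp]: "twins H v v"
  unfolding twins_def by blast

lemma twins_sym: "twins H u v \<Longrightarrow> twins H v u"
  unfolding twins_def by blast

lemma twins_trans: "twins H u v \<Longrightarrow> twins H v w \<Longrightarrow> twins H u w"
  unfolding twins_def by blast

lemma twins_induced: "u \<in> X \<Longrightarrow> v \<in> X \<Longrightarrow> twins (induced H X) u v \<longleftrightarrow> twins H u v"
  unfolding twins_def by auto

lemma twins_if_contractible: "contractible H W \<Longrightarrow> u \<in> W \<Longrightarrow> v \<in> W \<Longrightarrow> twins H u v"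
  unfolding contractible_def twins_def by blast

lemma contractible_twins:
  "u \<in> verts H \<Longrightarrow> v \<in> verts H \<Longrightarrow> twins H u v \<Longrightarrow> contractible H {u, v}"
  unfolding contractible_def twins_def by blast

lemma contractible_subset_or_disjoint:
  assumes "contractible H W"
  shows "W \<subseteq> {u \<in> verts H. twins H u y} \<or> W \<inter> {u \<in> verts H. twins H u y} = {}"
proof (cases "\<exists>z \<in> W. twins H z y")
  case True
  then obtain z where z: "z \<in> W" "twins H z y"
    by blast
  have "twins H u y" if "u \<in> W" for u
    using twins_trans[OF twins_if_contractible[OF assms that z(1)] z(2)] .
  with assms show ?thesis
    unfolding contractible_def by blast
next
  case False
  then show ?thesis
    by blast
qed

definition concentrate :: "'a set \<Rightarrow> 'a \<Rightarrow> ('a \<Rightarrow> real) \<Rightarrow> 'a \<Rightarrow> real" where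
  "concentrate W w p x = (if x \<in> W then if x = w then (\<Sum>y\<in>W. p y) else 0 else p x)"

lemma concentrate_eq_0: "x \<in> W \<Longrightarrow> x \<noteq> w \<Longrightarrow> concentrate W w p x = 0"
  unfolding concentrate_def by simp

lemma sum_concentrate:
  assumes S: "finite S" and W: "finite W" "w \<in> W" and sat: "W \<subseteq> S \<or> W \<inter> S = {}"
  shows "(\<Sum>x\<in>S. concentrate W w p x) = (\<Sum>x\<in>S. p x)"
proof (cases "W \<subseteq> S")
  case True
  have "(\<Sum>x\<in>W. concentrate W w p x) = (\<Sum>x\<in>W. if x = w then (\<Sum>y\<in>W. p y) else 0)"
    unfolding concentrate_def by (rule sum.cong) auto
  also have "\<dots> = (\<Sum>x\<in>W. p x)"
    using W by simp
  finally have "(\<Sum>x\<in>S - W. concentrate W w p x) + (\<Sum>x\<in>W. concentrate W w p x)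
      = (\<Sum>x\<in>S - W. p x) + (\<Sum>x\<in>W. p x)"
    unfolding concentrate_def by simp
  then show ?thesis
    using sum.subset_diff[OF True S] by metis
next
  case False
  with sat show ?thesis
    unfolding concentrate_def by (intro sum.cong) auto
qed

lemma concentrate_in_models:
  assumes sc: "scenario H" and W: "contractible H W" "w \<in> W" and p: "p \<in> models H"
  shows "concentrate W w p \<in> models H"
proof -
  have WV: "W \<subseteq> verts H" and sat: "\<And>e. e \<in> edges H \<Longrightarrow> W \<subseteq> e \<or> W \<inter> e = {}"
    using W(1) unfolding contractible_def by blast+
  have finW: "finite W"
    using WV sc finite_subset unfolding scenario_def by blast
  obtain e where e: "e \<in> edges H" "w \<in> e"
    using W(2) WV sc unfolding scenario_def by blast
  then have "W \<subseteq> e"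
    using sat W(2) by blast
  then have "(\<Sum>y\<in>W. p y) \<le> 1"
    by (rule sum_edge_le_1[OF sc p e(1)])
  moreover have "0 \<le> (\<Sum>y\<in>W. p y)"
    using p WV unfolding models_def by (intro sum_nonneg) auto
  moreover have "(\<Sum>x\<in>e. concentrate W w p x) = 1" if "e \<in> edges H" for e
    using sum_concentrate[OF finite_edge[OF sc that] finW W(2) sat[OF that]] p that
    unfolding models_def by simp
  moreover have "concentrate W w p \<in> extensional (verts H)"
    using p WV unfolding models_def concentrate_def extensional_def by auto
  ultimately show ?thesis
    using p unfolding models_def concentrate_def by auto
qed

lemma models_virt_incl: "virt_incl H H' \<Longrightarrow> models H' = models H"
  unfolding virt_incl_def virtual_edge_def models_def by auto

lemma virt_incl_completion: "scenario H \<Longrightarrow> virt_incl H (completion H)"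
  unfolding virt_incl_def completion_def virtual_edge_def models_def scenario_def
    verts_def edges_def by auto

lemma models_completion: "scenario H \<Longrightarrow> models (completion H) = models H"
  by (rule models_virt_incl[OF virt_incl_completion])

lemma virtual_edge_contains_twin:
  assumes sc: "scenario H" and u: "u \<in> support H" and v: "v \<in> verts H" and uv: "twins H u v"
    and e: "virtual_edge H e" "u \<in> e"
  shows "v \<in> e"
proof (rule ccontr)
  assume "v \<notin> e"
  with e(2) have "u \<noteq> v"
    by blast
  have "u \<in> verts H"
    using u support_subset[of H] by blast
  obtain p where p: "p \<in> models H" "p u \<noteq> 0"
    using u unfolding support_def by blast
  define q where "q = concentrate {u, v} v p"
  have "contractible H {u, v}"
    using contractible_twins[OF \<open>u \<in> verts H\<close> v uv] .
  then have "q \<in> models H"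
    unfolding q_def by (rule concentrate_in_models[OF sc _ _ p(1)]) simp
  have fin: "finite e"
    using sc e(1) finite_subset unfolding virtual_edge_def scenario_def by blast
  have "q u = 0"
    using \<open>u \<noteq> v\<close> unfolding q_def concentrate_def by simp
  moreover have "(\<Sum>x\<in>e - {u}. q x) = (\<Sum>x\<in>e - {u}. p x)"
    using \<open>v \<notin> e\<close> unfolding q_def concentrate_def by (intro sum.cong) auto
  ultimately have "(\<Sum>x\<in>e. q x) = (\<Sum>x\<in>e. p x) - p u"
    using sum.remove[OF fin e(2), of q] sum.remove[OF fin e(2), of p] by simp
  then show False
    using e(1) p \<open>q \<in> models H\<close> unfolding virtual_edge_def by simp
qed

definition twin_class :: "'a hypergraph \<Rightarrow> 'a \<Rightarrow> 'a set" where
  "twin_class H v = {u \<in> support H. twins H u v}"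

definition twin_classes :: "'a hypergraph \<Rightarrow> 'a set set" where
  "twin_classes H = twin_class H ` support H"

definition class_models :: "'a hypergraph \<Rightarrow> ('a set \<Rightarrow> real) set" where
  "class_models H = (\<lambda>p. restrict (\<lambda>C. \<Sum>v\<in>C. p v) (twin_classes H)) ` models H"

definition coarse_equiv :: "'a hypergraph \<Rightarrow> 'b hypergraph \<Rightarrow> bool" where
  "coarse_equiv H H' \<longleftrightarrow>
     model_iso (twin_classes H) (class_models H) (twin_classes H') (class_models H')"

lemma class_models_extensional: "class_models H \<subseteq> extensional (twin_classes H)"
  unfolding class_models_def by auto

lemma coarse_equiv_refl: "coarse_equiv H H"
  unfolding coarse_equiv_def by (rule model_iso_refl[OF class_models_extensional])

lemma coarse_equiv_sym: "coarse_equiv H H' \<Longrightarrow> coarse_equiv H' H"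
  unfolding coarse_equiv_def by (rule model_iso_sym[OF _ class_models_extensional])

lemma coarse_equiv_trans: "coarse_equiv H H' \<Longrightarrow> coarse_equiv H' H'' \<Longrightarrow> coarse_equiv H H''"
  unfolding coarse_equiv_def by (rule model_iso_trans)

lemma twin_class_cong: "twins H u v \<Longrightarrow> twin_class H u = twin_class H v"
  unfolding twin_class_def using twins_trans twins_sym by metis

lemma sum_twin_class:
  assumes sc: "scenario H" and p: "p \<in> models H"
  shows "(\<Sum>v\<in>twin_class H y. p v) = (\<Sum>v\<in>{u \<in> verts H. twins H u y}. p v)"
proof (rule sum.mono_neutral_left)
  show "finite {u \<in> verts H. twins H u y}"
    using finite_verts[OF sc] by simp
qed (use support_subset[of H] model_vanishes_off_support[OF p] in \<open>auto simp: twin_class_def\<close>)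

lemma coarse_equivI:
  fixes H :: "'a hypergraph" and H' :: "'b hypergraph"
  assumes bij: "bij_betw \<phi> (twin_classes H') (twin_classes H)"
    and fwd: "\<And>p. p \<in> models H \<Longrightarrow>
      \<exists>q \<in> models H'. \<forall>C \<in> twin_classes H'. (\<Sum>v\<in>\<phi> C. p v) = (\<Sum>v\<in>C. q v)"
    and bwd: "\<And>q. q \<in> models H' \<Longrightarrow>
      \<exists>p \<in> models H. \<forall>C \<in> twin_classes H'. (\<Sum>v\<in>\<phi> C. p v) = (\<Sum>v\<in>C. q v)"
  shows "coarse_equiv H H'"
proof -
  define F where "F f = restrict (f \<circ> \<phi>) (twin_classes H')" for f :: "'a set \<Rightarrow> real"
  have F: "F (restrict (\<lambda>C. \<Sum>v\<in>C. p v) (twin_classes H)) = restrict (\<lambda>C. \<Sum>v\<in>C. q v) (twin_classes H')"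
    if "\<forall>C \<in> twin_classes H'. (\<Sum>v\<in>\<phi> C. p v) = (\<Sum>v\<in>C. q v)" for p q
    using that bij_betwE[OF bij] unfolding F_def by (auto simp: fun_eq_iff)
  have "class_models H' = F ` class_models H"
  proof (intro equalityI subsetI)
    fix g assume "g \<in> class_models H'"
    then obtain q where q: "q \<in> models H'" "g = restrict (\<lambda>C. \<Sum>v\<in>C. q v) (twin_classes H')"
      unfolding class_models_def by auto
    obtain p where p: "p \<in> models H" "\<forall>C \<in> twin_classes H'. (\<Sum>v\<in>\<phi> C. p v) = (\<Sum>v\<in>C. q v)"
      using bwd[OF q(1)] by auto
    have "g = F (restrict (\<lambda>C. \<Sum>v\<in>C. p v) (twin_classes H))"
      using q(2) F[OF p(2)] by simp
    moreover have "restrict (\<lambda>C. \<Sum>v\<in>C. p v) (twin_classes H) \<in> class_models H"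
      unfolding class_models_def using p(1) by (rule imageI)
    ultimately show "g \<in> F ` class_models H"
      by (rule image_eqI)
  next
    fix g assume "g \<in> F ` class_models H"
    then obtain p where p: "p \<in> models H" "g = F (restrict (\<lambda>C. \<Sum>v\<in>C. p v) (twin_classes H))"
      unfolding class_models_def by auto
    obtain q where q: "q \<in> models H'" "\<forall>C \<in> twin_classes H'. (\<Sum>v\<in>\<phi> C. p v) = (\<Sum>v\<in>C. q v)"
      using fwd[OF p(1)] by auto
    have "g = restrict (\<lambda>C. \<Sum>v\<in>C. q v) (twin_classes H')"
      using p(2) F[OF q(2)] by simp
    then show "g \<in> class_models H'"
      unfolding class_models_def using q(1) by (rule image_eqI)
  qed
  with bij show ?thesis
    unfolding coarse_equiv_def model_iso_def F_def by blast
qed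

lemma coarse_equiv_virt_incl:
  assumes sc: "scenario H" and vi: "virt_incl H H'"
  shows "coarse_equiv H H'"
proof -
  have V: "verts H' = verts H" and E: "edges H \<subseteq> edges H'"
    and virt: "\<And>e. e \<in> edges H' - edges H \<Longrightarrow> virtual_edge H e"
    using vi unfolding virt_incl_def by auto
  have M: "models H' = models H"
    by (rule models_virt_incl[OF vi])
  have S: "support H' = support H"
    unfolding support_def V M ..
  have "twins H' u v \<longleftrightarrow> twins H u v" if uv: "u \<in> support H" "v \<in> support H" for u v
  proof
    show "twins H' u v \<Longrightarrow> twins H u v"
      using E unfolding twins_def by blast
  next
    assume twin: "twins H u v"
    have "u \<in> verts H" "v \<in> verts H"
      using uv support_subset[of H] by blast+
    then have "u \<in> e \<longleftrightarrow> v \<in> e" if "e \<in> edges H' - edges H" for e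
      using virtual_edge_contains_twin[OF sc _ _ _ virt[OF that]] uv twin twins_sym by metis
    with twin show "twins H' u v"
      unfolding twins_def by blast
  qed
  then have "twin_class H' v = twin_class H v" if "v \<in> support H" for v
    using that unfolding twin_class_def S by auto
  then have C: "twin_classes H' = twin_classes H"
    unfolding twin_classes_def S by simp
  then have "class_models H' = class_models H"
    unfolding class_models_def M by simp
  then show ?thesis
    using coarse_equiv_refl[of H] C unfolding coarse_equiv_def by simp
qed

lemma models_zero_reduces:
  assumes sc: "scenario H" and z: "zero_reduces H X"
  shows "models (induced H X) = (\<lambda>p. restrict p X) ` models H"
proof -
  have X: "X \<subseteq> verts H" and "{p \<in> models H. \<forall>v \<in> verts H - X. p v = 0} = models H"
    using z unfolding zero_reduces_def by auto
  then show ?thesis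
    using models_induced[OF sc X] by simp
qed

lemma support_zero_reduces:
  assumes sc: "scenario H" and z: "zero_reduces H X"
  shows "support (induced H X) = support H"
  using z models_zero_reduces[OF sc z] unfolding support_def zero_reduces_def by fastforce

lemma coarse_equiv_zero_reduces:
  assumes sc: "scenario H" and z: "zero_reduces H X"
  shows "coarse_equiv H (induced H X)"
proof -
  let ?H' = "induced H X"
  have van: "\<forall>p \<in> models H. \<forall>v \<in> verts H - X. p v = 0"
    using z unfolding zero_reduces_def by auto
  have M: "models ?H' = (\<lambda>p. restrict p X) ` models H"
    by (rule models_zero_reduces[OF sc z])
  have S: "support ?H' = support H"
    by (rule support_zero_reduces[OF sc z])
  have SX: "support H \<subseteq> X"
    using van unfolding support_def by blast
  then have "twin_class ?H' v = twin_class H v" if "v \<in> support H" for v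
    using that twins_induced[of _ X v H] unfolding twin_class_def S by blast
  then have C: "twin_classes ?H' = twin_classes H"
    unfolding twin_classes_def S by simp
  have "C \<subseteq> X" if "C \<in> twin_classes H" for C
    using that SX unfolding twin_classes_def twin_class_def by blast
  then have sums: "restrict (\<lambda>C. \<Sum>v\<in>C. restrict p X v) (twin_classes H)
      = restrict (\<lambda>C. \<Sum>v\<in>C. p v) (twin_classes H)" for p :: "'a \<Rightarrow> real"
    by (intro restrict_ext sum.cong) auto
  have "class_models ?H' = class_models H"
    unfolding class_models_def M C image_image by (rule image_cong[OF refl sums])
  then show ?thesis
    using coarse_equiv_refl[of H] C unfolding coarse_equiv_def by simp
qed

lemma remove_zero_eq_induced: "remove_zero H = induced H (support H)"
  unfolding remove_zero_def support_def ..

lemma zero_reduces_support: "zero_reduces H (support H)"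
  unfolding zero_reduces_def support_def by blast

lemma scenario_remove_zero: "scenario H \<Longrightarrow> scenario (remove_zero H)"
  unfolding remove_zero_eq_induced by (rule scenario_induced[OF _ support_subset])

lemma support_remove_zero: "scenario H \<Longrightarrow> support (remove_zero H) = verts (remove_zero H)"
  unfolding remove_zero_eq_induced by (simp add: support_zero_reduces[OF _ zero_reduces_support])

lemma coarse_equiv_remove_zero: "scenario H \<Longrightarrow> coarse_equiv H (remove_zero H)"
  unfolding remove_zero_eq_induced by (rule coarse_equiv_zero_reduces[OF _ zero_reduces_support])

locale contraction_step =
  fixes H :: "'a hypergraph" and W W' :: "'a set"
  assumes scenario: "scenario H" and contractible: "contractible H W"
    and kept_subset: "W' \<subseteq> W" and kept_nonempty: "W' \<noteq> {}"
begin

abbreviation V' :: "'a set" where "V' \<equiv> verts H - (W - W')"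

abbreviation H' :: "'a hypergraph" where "H' \<equiv> induced H V'"

lemma W_subset: "W \<subseteq> verts H"
  using contractible unfolding contractible_def by blast

lemma finite_W: "finite W"
  using W_subset finite_verts[OF scenario] finite_subset by blast

lemma scenario_H': "scenario H'"
  using scenario_induced[OF scenario] by blast

lemma models_H': "models H' = (\<lambda>p. restrict p V') ` {p \<in> models H. \<forall>v \<in> W - W'. p v = 0}"
proof -
  have "verts H - V' = W - W'"
    using W_subset by blast
  then show ?thesis
    using models_induced[OF scenario, of V'] by simp
qed

lemma concentrate_in_models_H':
  assumes p: "p \<in> models H" and w: "w \<in> W'"
  shows "restrict (concentrate W w p) V' \<in> models H'"
proof -
  have "concentrate W w p \<in> models H"
    using concentrate_in_models[OF scenario contractible _ p] w kept_subset by blast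
  moreover have "\<forall>v \<in> W - W'. concentrate W w p v = 0"
    using w by (auto intro: concentrate_eq_0)
  ultimately show ?thesis
    unfolding models_H' by blast
qed

lemma support_H': "support H' = (support H - W) \<union> {v \<in> W'. W \<inter> support H \<noteq> {}}"
proof (intro equalityI subsetI)
  fix v assume "v \<in> support H'"
  then obtain p where p: "p \<in> models H" "\<forall>v \<in> W - W'. p v = 0" and v: "v \<in> V'" "p v \<noteq> 0"
    unfolding support_def models_H' by auto
  then have "v \<in> support H"
    unfolding support_def by blast
  with v show "v \<in> (support H - W) \<union> {v \<in> W'. W \<inter> support H \<noteq> {}}"
    by blast
next
  obtain w0 where w0: "w0 \<in> W'"
    using kept_nonempty by blast
  fix v assume v: "v \<in> (support H - W) \<union> {v \<in> W'. W \<inter> support H \<noteq> {}}"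
  then obtain w p where w: "w \<in> W'" and p: "p \<in> models H" and nz: "concentrate W w p v \<noteq> 0"
  proof cases
    assume "v \<in> support H - W"
    then obtain p where "p \<in> models H" "p v \<noteq> 0"
      unfolding support_def by blast
    with \<open>v \<in> support H - W\<close> that[OF w0] show thesis
      unfolding concentrate_def by simp
  next
    assume "v \<notin> support H - W"
    with v obtain u p where "v \<in> W'" "u \<in> W" "p \<in> models H" "p u \<noteq> 0"
      unfolding support_def by blast
    moreover have "0 \<le> p x" if "x \<in> W" for x
      using \<open>p \<in> models H\<close> that W_subset unfolding models_def by auto
    ultimately have "(\<Sum>x\<in>W. p x) \<noteq> 0"
      using finite_W by (auto simp: sum_nonneg_eq_0_iff)
    with \<open>v \<in> W'\<close> kept_subset that[OF \<open>v \<in> W'\<close> \<open>p \<in> models H\<close>] show thesis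
      unfolding concentrate_def by auto
  qed
  moreover have "v \<in> V'"
    using v support_subset[of H] kept_subset W_subset by blast
  ultimately show "v \<in> support H'"
    unfolding support_def verts_induced
    by (intro CollectI conjI bexI[OF _ concentrate_in_models_H'[OF p w]]) simp_all
qed

lemma support_H'_full:
  assumes "support H = verts H"
  shows "support H' = verts H'"
proof -
  have "W \<inter> support H \<noteq> {}"
    using assms W_subset kept_subset kept_nonempty by blast
  then show ?thesis
    unfolding support_H' assms using kept_subset W_subset by auto
qed

lemma support_H'_subset: "support H' \<subseteq> V'"
  using support_subset[of H'] by simp

lemma twin_in_support:
  assumes y: "y \<in> support H'"
  obtains z where "z \<in> support H" and "twins H z y"
proof (cases "y \<in> W")
  case True
  with y obtain z where z: "z \<in> W" "z \<in> support H"
    unfolding support_H' by blast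
  have "twins H z y"
    using twins_if_contractible[OF contractible z(1) True] .
  with z(2) show thesis
    by (rule that)
next
  case False
  with y kept_subset have "y \<in> support H"
    unfolding support_H' by blast
  then show thesis
    by (rule that[OF _ twins_refl])
qed

definition lift_class :: "'a set \<Rightarrow> 'a set" where
  "lift_class C = {u \<in> support H. \<exists>y \<in> C. twins H u y}"

lemma lift_twin_class:
  assumes y: "y \<in> support H'"
  shows "lift_class (twin_class H' y) = twin_class H y"
proof (intro equalityI subsetI)
  fix u assume "u \<in> lift_class (twin_class H' y)"
  then obtain y' where u: "u \<in> support H" "twins H u y'" and y': "y' \<in> twin_class H' y"
    unfolding lift_class_def by blast
  then have "y' \<in> V'" "twins H' y' y"
    using support_H'_subset by (auto simp: twin_class_def)
  moreover have "y \<in> V'"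
    using y support_H'_subset by blast
  ultimately have "twins H y' y"
    by (simp add: twins_induced)
  with u show "u \<in> twin_class H y"
    by (simp add: twin_class_def twins_trans[OF u(2)])
next
  fix u assume "u \<in> twin_class H y"
  then have "u \<in> support H" "twins H u y"
    by (simp_all add: twin_class_def)
  moreover have "y \<in> twin_class H' y"
    using y by (simp add: twin_class_def)
  ultimately show "u \<in> lift_class (twin_class H' y)"
    unfolding lift_class_def by blast
qed

lemma bij_lift_class: "bij_betw lift_class (twin_classes H') (twin_classes H)"
proof (rule bij_betw_imageI)
  show "inj_on lift_class (twin_classes H')"
  proof (rule inj_onI)
    fix C1 C2 assume "C1 \<in> twin_classes H'" "C2 \<in> twin_classes H'" "lift_class C1 = lift_class C2"
    then obtain y1 y2 where y: "y1 \<in> support H'" "y2 \<in> support H'"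
      and C: "C1 = twin_class H' y1" "C2 = twin_class H' y2"
      and eq: "twin_class H y1 = twin_class H y2"
      unfolding twin_classes_def by (auto simp: lift_twin_class)
    obtain z where z: "z \<in> support H" "twins H z y1"
      using twin_in_support[OF y(1)] .
    then have "z \<in> twin_class H y2"
      unfolding eq[symmetric] by (simp add: twin_class_def)
    then have "twins H y1 y2"
      using twins_trans[OF twins_sym[OF z(2)]] by (simp add: twin_class_def)
    moreover have "y1 \<in> V'" "y2 \<in> V'"
      using y support_H'_subset by blast+
    ultimately have "twins H' y1 y2"
      by (simp add: twins_induced)
    then show "C1 = C2"
      unfolding C by (rule twin_class_cong)
  qed
next
  have twin_class_in: "twin_class H y \<in> twin_classes H" if y: "y \<in> support H'" for y
  proof -
    obtain z where "z \<in> support H" "twins H z y"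
      using twin_in_support[OF y] .
    then show ?thesis
      unfolding twin_classes_def using twin_class_cong by (metis image_eqI)
  qed
  have twin_class_lifted: "twin_class H x \<in> lift_class ` twin_classes H'" if x: "x \<in> support H" for x
  proof -
    obtain w0 where w0: "w0 \<in> W'"
      using kept_nonempty by blast
    obtain y where y: "y \<in> support H'" "twins H y x"
    proof (cases "x \<in> W")
      case True
      with x w0 have "w0 \<in> support H'"
        unfolding support_H' by blast
      moreover have "twins H w0 x"
        using twins_if_contractible[OF contractible _ True] w0 kept_subset by blast
      ultimately show thesis
        by (rule that)
    next
      case False
      with x have "x \<in> support H'"
        unfolding support_H' by blast
      then show thesis
        by (rule that[OF _ twins_refl])
    qed
    have "twin_class H x = lift_class (twin_class H' y)"
      using twin_class_cong[OF y(2)] lift_twin_class[OF y(1)] by simp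
    moreover have "twin_class H' y \<in> twin_classes H'"
      using y(1) unfolding twin_classes_def by (rule imageI)
    ultimately show ?thesis
      by (rule image_eqI)
  qed
  show "lift_class ` twin_classes H' = twin_classes H"
    using twin_class_in twin_class_lifted lift_twin_class
    unfolding twin_classes_def[of H] twin_classes_def[of H'] by auto
qed

lemma sum_twin_class_H':
  assumes p: "p \<in> models H" "\<forall>v \<in> W - W'. p v = 0" and y: "y \<in> support H'"
  shows "(\<Sum>v\<in>twin_class H' y. restrict p V' v) = (\<Sum>v\<in>twin_class H y. p v)"
proof -
  have q: "restrict p V' \<in> models H'"
    using p unfolding models_H' by blast
  have yV: "y \<in> V'"
    using y support_H'_subset by blast
  have "(\<Sum>v\<in>twin_class H' y. restrict p V' v) = (\<Sum>v\<in>{u \<in> V'. twins H' u y}. restrict p V' v)"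
    using sum_twin_class[OF scenario_H' q] by simp
  also have "\<dots> = (\<Sum>v\<in>{u \<in> V'. twins H u y}. p v)"
    using yV by (intro sum.cong) (auto simp: twins_induced)
  also have "\<dots> = (\<Sum>v\<in>{u \<in> verts H. twins H u y}. p v)"
    using finite_verts[OF scenario] p(2) by (intro sum.mono_neutral_left) auto
  also have "\<dots> = (\<Sum>v\<in>twin_class H y. p v)"
    using sum_twin_class[OF scenario p(1)] by simp
  finally show ?thesis .
qed

lemma twin_classes_H'E:
  assumes "C \<in> twin_classes H'"
  obtains y where "y \<in> support H'" and "C = twin_class H' y" and "lift_class C = twin_class H y"
proof -
  from assms obtain y where "y \<in> support H'" "C = twin_class H' y"
    unfolding twin_classes_def by auto
  with lift_twin_class that show thesis
    by simp
qed

lemma coarse_equiv_H': "coarse_equiv H H'"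
proof (rule coarse_equivI[OF bij_lift_class])
  fix p assume p: "p \<in> models H"
  obtain w0 where w0: "w0 \<in> W'"
    using kept_nonempty by blast
  let ?c = "concentrate W w0 p"
  have c_model: "?c \<in> models H"
    using w0 kept_subset by (intro concentrate_in_models[OF scenario contractible _ p]) blast
  have c_vanishes: "\<forall>v \<in> W - W'. ?c v = 0"
    using w0 by (auto intro: concentrate_eq_0)
  have "(\<Sum>v\<in>lift_class C. p v) = (\<Sum>v\<in>C. restrict ?c V' v)" if C: "C \<in> twin_classes H'" for C
  proof -
    obtain y where y: "y \<in> support H'" "C = twin_class H' y" "lift_class C = twin_class H y"
      using twin_classes_H'E[OF C] .
    have "(\<Sum>v\<in>twin_class H y. p v) = (\<Sum>v\<in>{u \<in> verts H. twins H u y}. p v)"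
      by (rule sum_twin_class[OF scenario p])
    also have "\<dots> = (\<Sum>v\<in>{u \<in> verts H. twins H u y}. ?c v)"
      using finite_verts[OF scenario] finite_W w0 kept_subset
        contractible_subset_or_disjoint[OF contractible, of y]
      by (intro sum_concentrate[symmetric]) auto
    also have "\<dots> = (\<Sum>v\<in>twin_class H y. ?c v)"
      by (rule sum_twin_class[OF scenario c_model, symmetric])
    also have "\<dots> = (\<Sum>v\<in>twin_class H' y. restrict ?c V' v)"
      by (rule sum_twin_class_H'[OF c_model c_vanishes y(1), symmetric])
    finally show ?thesis
      using y(2,3) by simp
  qed
  moreover have "restrict ?c V' \<in> models H'"
    using c_model c_vanishes unfolding models_H' by blast
  ultimately show "\<exists>q \<in> models H'. \<forall>C \<in> twin_classes H'. (\<Sum>v\<in>lift_class C. p v) = (\<Sum>v\<in>C. q v)"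
    by blast
next
  fix q assume "q \<in> models H'"
  then obtain p where p: "p \<in> models H" "\<forall>v \<in> W - W'. p v = 0" and q: "q = restrict p V'"
    unfolding models_H' by blast
  have "(\<Sum>v\<in>lift_class C. p v) = (\<Sum>v\<in>C. q v)" if C: "C \<in> twin_classes H'" for C
  proof -
    obtain y where y: "y \<in> support H'" "C = twin_class H' y" "lift_class C = twin_class H y"
      using twin_classes_H'E[OF C] .
    show ?thesis
      using sum_twin_class_H'[OF p y(1)] y(2,3) unfolding q by simp
  qed
  with p(1) show "\<exists>p \<in> models H. \<forall>C \<in> twin_classes H'. (\<Sum>v\<in>lift_class C. p v) = (\<Sum>v\<in>C. q v)"
    by blast
qed

end

lemma contraction_cases:
  assumes "scenario H" and "contraction H H'"
  obtains W W' where "contraction_step H W W'" and "H' = contraction_step.H' H W W'"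
  using assms unfolding contraction_def contraction_step_def by blast

lemma scenario_contraction: "scenario H \<Longrightarrow> contraction H H' \<Longrightarrow> scenario H'"
  by (metis contraction_cases contraction_step.scenario_H')

lemma coarse_equiv_contraction: "scenario H \<Longrightarrow> contraction H H' \<Longrightarrow> coarse_equiv H H'"
  by (metis contraction_cases contraction_step.coarse_equiv_H')

lemma support_contraction_full:
  "scenario H \<Longrightarrow> contraction H H' \<Longrightarrow> support H = verts H \<Longrightarrow> support H' = verts H'"
  by (metis contraction_cases contraction_step.support_H'_full)

lemma coarse_equiv_contraction_chain:
  assumes "contraction\<^sup>*\<^sup>* H H'" and "scenario H" and "support H = verts H"
  shows "scenario H' \<and> support H' = verts H' \<and> coarse_equiv H H'"
  using assms
proof (induction rule: rtranclp_induct)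
  case base
  then show ?case
    using coarse_equiv_refl by blast
next
  case (step H' H'')
  then show ?case
    using scenario_contraction support_contraction_full coarse_equiv_contraction coarse_equiv_trans
    by blast
qed

lemma vcz_equiv_coarse_equiv: "vcz_equiv H H' \<Longrightarrow> coarse_equiv H H'"
proof (induction rule: vcz_equiv.induct)
  case (vcz_refl H)
  show ?case by (rule coarse_equiv_refl)
next
  case (vcz_virt H H')
  show ?case by (rule coarse_equiv_virt_incl[OF vcz_virt(1,3)])
next
  case (vcz_contr H H')
  show ?case by (rule coarse_equiv_contraction[OF vcz_contr(1,3)])
next
  case (vcz_zero H W)
  show ?case by (rule coarse_equiv_zero_reduces[OF vcz_zero(1,2)])
next
  case (vcz_sym H H')
  show ?case by (rule coarse_equiv_sym[OF vcz_sym.IH])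
next
  case (vcz_trans H H' H'')
  show ?case by (rule coarse_equiv_trans[OF vcz_trans.IH])
qed

lemma minimal_contraction_no_twins:
  assumes sc: "scenario H" and min: "\<And>H'. contraction H H' \<Longrightarrow> card (verts H) \<le> card (verts H')"
    and uv: "u \<in> verts H" "v \<in> verts H" "twins H u v"
  shows "u = v"
proof (rule ccontr)
  assume "u \<noteq> v"
  then have "verts H - ({u, v} - {u}) = verts H - {v}"
    by blast
  moreover have "contraction H (induced H (verts H - ({u, v} - {u})))"
    unfolding contraction_def using contractible_twins[OF uv] by blast
  ultimately have "card (verts H) \<le> card (verts H - {v})"
    using min by fastforce
  moreover have "card (verts H - {v}) < card (verts H)"
    by (rule card_Diff1_less[OF finite_verts[OF sc] uv(2)])
  ultimately show False
    by simp
qed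

lemma model_iso_twin_classes_singletons:
  assumes full: "support H = verts H"
    and no_twins: "\<And>u v. u \<in> verts H \<Longrightarrow> v \<in> verts H \<Longrightarrow> twins H u v \<Longrightarrow> u = v"
  shows "model_iso (twin_classes H) (class_models H) (verts H) (models H)"
proof -
  have "twin_class H v = {v}" if "v \<in> verts H" for v
    using that full no_twins unfolding twin_class_def by auto
  then have classes: "twin_classes H = (\<lambda>v. {v}) ` verts H"
    unfolding twin_classes_def full by simp
  then have bij: "bij_betw (\<lambda>v. {v}) (verts H) (twin_classes H)"
    by (simp add: bij_betw_def inj_on_def)
  have "restrict (restrict (\<lambda>C. \<Sum>v\<in>C. p v) (twin_classes H) \<circ> (\<lambda>v. {v})) (verts H) = p"
    if "p \<in> models H" for p
    using that unfolding classes models_def by (auto simp: fun_eq_iff extensional_def)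
  then have "models H = (\<lambda>f. restrict (f \<circ> (\<lambda>v. {v})) (verts H)) ` class_models H"
    unfolding class_models_def image_image by simp
  with bij show ?thesis
    unfolding model_iso_def by blast
qed

lemma model_iso_vcz_choice:
  assumes sc: "scenario H" and choice: "is_vcz_choice H K"
  shows "model_iso (twin_classes H) (class_models H) (verts K) (models K)"
proof -
  obtain Hc where chain: "contraction\<^sup>*\<^sup>* (remove_zero H) Hc"
    and min: "\<And>H''. contraction\<^sup>*\<^sup>* (remove_zero H) H'' \<Longrightarrow> card (verts Hc) \<le> card (verts H'')"
    and V: "verts K = verts Hc" and vi: "virt_incl K (completion Hc)"
    using choice unfolding is_vcz_choice_def by blast
  have Hc: "scenario Hc" "support Hc = verts Hc" "coarse_equiv (remove_zero H) Hc"
    using coarse_equiv_contraction_chain[OF chain scenario_remove_zero[OF sc] support_remove_zero[OF sc]]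
    by auto
  have no_twins: "u = v" if "u \<in> verts Hc" "v \<in> verts Hc" "twins Hc u v" for u v
    using minimal_contraction_no_twins[OF Hc(1) _ that] min chain
    by (meson rtranclp.rtrancl_into_rtrancl)
  have "coarse_equiv H Hc"
    using coarse_equiv_trans[OF coarse_equiv_remove_zero[OF sc] Hc(3)] .
  then have "model_iso (twin_classes H) (class_models H) (verts Hc) (models Hc)"
    using model_iso_twin_classes_singletons[OF Hc(2) no_twins]
    unfolding coarse_equiv_def by (rule model_iso_trans)
  moreover have "models K = models Hc"
    using models_virt_incl[OF vi] models_completion[OF Hc(1)] by simp
  ultimately show ?thesis
    using V by simp
qed

theorem theorem2p1:
  fixes H1 H2 K1 K2 :: "'a hypergraph"
  assumes "scenario H1" and "scenario H2"
    and "vcz_equiv H1 H2"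
    and "is_vcz_choice H1 K1" and "is_vcz_choice H2 K2"
  shows "obs_equiv K1 K2"
proof -
  have iso1: "model_iso (twin_classes H1) (class_models H1) (verts K1) (models K1)"
    by (rule model_iso_vcz_choice[OF assms(1,4)])
  have iso2: "model_iso (twin_classes H2) (class_models H2) (verts K2) (models K2)"
    by (rule model_iso_vcz_choice[OF assms(2,5)])
  have "coarse_equiv H1 H2"
    using assms(3) by (rule vcz_equiv_coarse_equiv)
  then have "model_iso (twin_classes H1) (class_models H1) (verts K2) (models K2)"
    using iso2 unfolding coarse_equiv_def by (rule model_iso_trans)
  with model_iso_sym[OF iso1 class_models_extensional] show ?thesis
    unfolding obs_equiv_iff_model_iso by (rule model_iso_trans)
qed

end
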